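(* Let $a,b\ge 1$ and $s\in\mathbb{R}$. Let $f$ be the betaized Meixner-Morris density $$ f(x)=\frac{f_a(x)\,f_b(s-x)}{f_{a+b}(s)},\quad x\in\mathbb{R}, $$ where for $\rho>0$, $f_\rho(x)=\frac{2^{\rho-2}}{\pi\Gamma(\rho)}\left|\Gamma\left(\frac{\rho+ix}{2}\right)\right|^2$. Define $$ g(x)=\gamma\left(\left(\tfrac{a}{2}\right)^2+\left(\tfrac{x}{2}\right)^2\right)^{\frac{a-1}{2}}\left(\left(\tfrac{b}{2}\right)^2+\left(\tfrac{s-x}{2}\right)^2\right)^{\frac{b-1}{2}}e^{-x\arctan(x/a)-(s-x)\arctan((s-x)/b)}, $$ with $$ \gamma=\frac{\pi\,\Gamma(a+b)}{e^{a+b}\,\Gamma(a)\Gamma(b)\left|\Gamma\left(\frac{a+b+is}{2}\right)\right|^2}. $$ Then for all $x\in\mathbb{R}$, $$ \alpha\, g(x)\le f(x)\le \beta\, g(x), $$ where $\alpha=(1-3/(a\pi^2))^2(1-3/(b\pi^2))^2$ and $\beta=(1+3/(a\pi^2))^2(1+3/(b\pi^2))^2$.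
   Context: $\Gamma$ denotes the complex Euler gamma function, $\Gamma(z)=\int_0^\infty t^{z-1}e^{-t}\,dt$ for $\mathrm{Re}(z)>0$. *)

theory Defs
  imports "HOL-Analysis.Analysis"
begin

definition MM_density :: "real \<Rightarrow> real \<Rightarrow> real" where
  "MM_density \<rho> x = 2 powr (\<rho> - 2) / (pi * Gamma \<rho>) *
     (cmod (Gamma (Complex (\<rho> / 2) (x / 2))))\<^sup>2"

definition betaized_MM :: "real \<Rightarrow> real \<Rightarrow> real \<Rightarrow> real \<Rightarrow> real" where
  "betaized_MM a b s x = MM_density a x * MM_density b (s - x) / MM_density (a + b) s"

definition gamma_const :: "real \<Rightarrow> real \<Rightarrow> real \<Rightarrow> real" where
  "gamma_const a b s = pi * Gamma (a + b) /
     (exp (a + b) * Gamma a * Gamma b * (cmod (Gamma (Complex ((a + b) / 2) (s / 2))))\<^sup>2)"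

definition g_approx :: "real \<Rightarrow> real \<Rightarrow> real \<Rightarrow> real \<Rightarrow> real" where
  "g_approx a b s x = gamma_const a b s *
     ((a / 2)\<^sup>2 + (x / 2)\<^sup>2) powr ((a - 1) / 2) *
     ((b / 2)\<^sup>2 + ((s - x) / 2)\<^sup>2) powr ((b - 1) / 2) *
     exp (- x * arctan (x / a) - (s - x) * arctan ((s - x) / b))"

end

theory Submission
  imports Defs "HOL-Real_Asymp.Real_Asymp"
begin

(* Let R(x, y) be the real part of the remainder in Stirling's formula for ln Gamma (x + iy).
   Then |Gamma ((rho + ix)/2)|^2 = 2 pi ((rho/2)^2 + (x/2)^2) powr ((rho - 1)/2)
   exp (- x arctan (x/rho) - rho) exp (2 R(rho/2, x/2)), so f = g exp (2 R(a/2, x/2))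
   exp (2 R(b/2, (s-x)/2)), and the theorem follows from |R(x, y)| <= 1/(12 x), because
   (1 - 3/(a pi^2))^2 <= exp (-1/(3 a)) and exp (1/(3 a)) <= (1 + 3/(a pi^2))^2 for a >= 1.
   The bound on R comes from telescoping: the increment R(x, y) - R(x + 1, y) is an elementary
   function of size at most 1/(12 x (x + 1)), and R(x + n, y) -> 0. Via Gauss's product formula
   the latter reduces to Stirling's formula for real arguments, which follows from Legendre's
   duplication formula. *)

lemma ln_square_plus_has_real_derivative:
  assumes "(f has_real_derivative f') (at t)" "f t \<noteq> 0"
  shows "((\<lambda>t. ln ((f t)\<^sup>2 + y\<^sup>2)) has_real_derivative 2 * f t * f' / ((f t)\<^sup>2 + y\<^sup>2)) (at t)"
proof -
  have "(f t)\<^sup>2 + y\<^sup>2 > 0" using assms(2) by (simp add: add_pos_nonneg)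
  then show ?thesis
    using assms by (auto intro!: derivative_eq_intros simp: field_simps)
qed

lemma arctan_div_has_real_derivative:
  assumes "(f has_real_derivative f') (at t)" "f t \<noteq> 0"
  shows "((\<lambda>t. arctan (y / f t)) has_real_derivative - y * f' / ((f t)\<^sup>2 + y\<^sup>2)) (at t)"
proof -
  have "(f t)\<^sup>2 + y\<^sup>2 > 0" using assms(2) by (simp add: add_pos_nonneg)
  then show ?thesis
    using assms by (auto intro!: derivative_eq_intros simp: field_simps power2_eq_square)
qed

lemma abs_diff_le_of_deriv_dominated:
  fixes f g :: "real \<Rightarrow> real"
  assumes "a \<le> b"
    and f: "\<And>t. a \<le> t \<Longrightarrow> t \<le> b \<Longrightarrow> (f has_real_derivative f' t) (at t)"
    and g: "\<And>t. a \<le> t \<Longrightarrow> t \<le> b \<Longrightarrow> (g has_real_derivative g' t) (at t)"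
    and "\<And>t. a \<le> t \<Longrightarrow> t \<le> b \<Longrightarrow> \<bar>f' t\<bar> \<le> g' t"
  shows "\<bar>f b - f a\<bar> \<le> g b - g a"
proof -
  have "g a + c * f a \<le> g b + c * f b" if "\<bar>c\<bar> = 1" for c
  proof (rule DERIV_nonneg_imp_nondecreasing [OF \<open>a \<le> b\<close>])
    fix t assume t: "a \<le> t" "t \<le> b"
    have "((\<lambda>t. g t + c * f t) has_real_derivative g' t + c * f' t) (at t)"
      using f [OF t] g [OF t] by (intro DERIV_add DERIV_cmult)
    moreover have "\<bar>c * f' t\<bar> \<le> g' t"
      using that assms(4) [OF t] by (simp add: abs_mult)
    ultimately show "\<exists>y. ((\<lambda>t. g t + c * f t) has_real_derivative y) (at t) \<and> 0 \<le> y"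
      by (intro exI conjI) (auto simp: abs_le_iff)
  qed
  from this [of 1] this [of "-1"] show ?thesis by (simp add: abs_le_iff)
qed

lemma Re_pos_not_nonpos_Ints: "Re z > 0 \<Longrightarrow> z \<notin> \<int>\<^sub>\<le>\<^sub>0"
  by (auto simp: complex_nonpos_Reals_iff dest: subsetD [OF nonpos_Ints_subset_nonpos_Reals])

(* Real part of (z - 1/2) Ln z - z at z = x + iy with x > 0, where Arg z = arctan (y / x). *)
definition stirling_main_term :: "real \<Rightarrow> real \<Rightarrow> real" where
  "stirling_main_term x y = (x - 1/2) * ln (x\<^sup>2 + y\<^sup>2) / 2 - y * arctan (y / x) - x"

definition stirling_remainder :: "real \<Rightarrow> real \<Rightarrow> real" where
  "stirling_remainder x y =
     ln (cmod (Gamma (Complex x y))) - stirling_main_term x y - ln (2 * pi) / 2"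

(* At P = x + 1/2 and t = 1/2 this is the increment stirling_remainder x y - stirling_remainder (x + 1) y;
   it is bounded by integrating its t-derivative from t = 0, where it vanishes. *)
definition stirling_step :: "real \<Rightarrow> real \<Rightarrow> real \<Rightarrow> real" where
  "stirling_step P y t = P / 2 * (ln ((P + t)\<^sup>2 + y\<^sup>2) - ln ((P - t)\<^sup>2 + y\<^sup>2))
     - y * arctan (y / (P + t)) + y * arctan (y / (P - t)) - 2 * t"

lemma stirling_step_has_derivative:
  assumes "\<bar>t\<bar> < P"
  shows "(stirling_step P y has_real_derivative
      2 * t\<^sup>2 * (P\<^sup>2 - t\<^sup>2 - y\<^sup>2) / (((P + t)\<^sup>2 + y\<^sup>2) * ((P - t)\<^sup>2 + y\<^sup>2))) (at t)"
proof -
  define A where "A = (P + t)\<^sup>2 + y\<^sup>2"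
  define B where "B = (P - t)\<^sup>2 + y\<^sup>2"
  have "P + t \<noteq> 0" "P - t \<noteq> 0" using assms by auto
  then have "A \<noteq> 0" "B \<noteq> 0" unfolding A_def B_def by (auto simp: add_nonneg_eq_0_iff)
  have "((\<lambda>t. P + t) has_real_derivative 1) (at t)" "((\<lambda>t. P - t) has_real_derivative -1) (at t)"
    by (auto intro!: derivative_eq_intros)
  then have "(stirling_step P y has_real_derivative
      P / 2 * (2 * (P + t) * 1 / A - 2 * (P - t) * -1 / B) - y * (- y * 1 / A) + y * (- y * -1 / B) - 2 * 1)
      (at t)"
    unfolding stirling_step_def [abs_def] A_def B_def using \<open>P + t \<noteq> 0\<close> \<open>P - t \<noteq> 0\<close>
    by (intro DERIV_diff DERIV_add DERIV_cmult DERIV_ident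
        ln_square_plus_has_real_derivative arctan_div_has_real_derivative)
  moreover have "P / 2 * (2 * (P + t) * 1 / A - 2 * (P - t) * -1 / B) - y * (- y * 1 / A)
      + y * (- y * -1 / B) - 2 * 1 = 2 * t\<^sup>2 * (P\<^sup>2 - t\<^sup>2 - y\<^sup>2) / (A * B)"
  proof -
    have numerator: "2 * t\<^sup>2 * (P\<^sup>2 - t\<^sup>2 - y\<^sup>2) =
        P * (P + t) * B + P * (P - t) * A + y\<^sup>2 * (A + B) - 2 * A * B"
      unfolding A_def B_def by (simp add: power2_eq_square algebra_simps)
    show ?thesis
      unfolding numerator using \<open>A \<noteq> 0\<close> \<open>B \<noteq> 0\<close> by (simp add: field_simps power2_eq_square)
  qed
  ultimately show ?thesis
    unfolding A_def B_def by (rule DERIV_cong)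
qed

lemma abs_stirling_step_deriv_le:
  fixes P t y :: real
  assumes "\<bar>t\<bar> < P"
  shows "\<bar>2 * t\<^sup>2 * (P\<^sup>2 - t\<^sup>2 - y\<^sup>2) / (((P + t)\<^sup>2 + y\<^sup>2) * ((P - t)\<^sup>2 + y\<^sup>2))\<bar>
           \<le> 2 * t\<^sup>2 / (P\<^sup>2 - t\<^sup>2)"
proof -
  define A where "A = P\<^sup>2 - t\<^sup>2 - y\<^sup>2"
  have B: "P\<^sup>2 - t\<^sup>2 > 0"
    using assms power_strict_mono [of "\<bar>t\<bar>" P 2] by simp
  have D: "((P + t)\<^sup>2 + y\<^sup>2) * ((P - t)\<^sup>2 + y\<^sup>2) = A\<^sup>2 + 4 * P\<^sup>2 * y\<^sup>2"
    unfolding A_def by (simp add: power2_eq_square algebra_simps)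
  have "\<bar>A\<bar> * (P\<^sup>2 - t\<^sup>2) \<le> A\<^sup>2 + P\<^sup>2 * y\<^sup>2"
  proof (cases "A \<ge> 0")
    case True
    then have "\<bar>A\<bar> * (P\<^sup>2 - t\<^sup>2) = A\<^sup>2 + A * y\<^sup>2"
      unfolding A_def by (simp add: power2_eq_square algebra_simps)
    moreover have "A * y\<^sup>2 \<le> P\<^sup>2 * y\<^sup>2"
      unfolding A_def by (intro mult_right_mono) auto
    ultimately show ?thesis by linarith
  next
    case False
    then have "\<bar>A\<bar> * (P\<^sup>2 - t\<^sup>2) \<le> y\<^sup>2 * P\<^sup>2"
      using B unfolding A_def by (intro mult_mono) auto
    then show ?thesis by (simp add: mult.commute add_increasing)
  qed
  moreover have "0 \<le> P\<^sup>2 * y\<^sup>2" by simp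
  ultimately have "\<bar>A\<bar> * (P\<^sup>2 - t\<^sup>2) \<le> A\<^sup>2 + 4 * P\<^sup>2 * y\<^sup>2" by linarith
  moreover have "A\<^sup>2 + 4 * P\<^sup>2 * y\<^sup>2 > 0"
    unfolding D [symmetric] using assms by (intro mult_pos_pos add_pos_nonneg) auto
  ultimately have "\<bar>A\<bar> / (A\<^sup>2 + 4 * P\<^sup>2 * y\<^sup>2) \<le> 1 / (P\<^sup>2 - t\<^sup>2)"
    using B by (simp add: divide_simps mult.commute)
  then have "2 * t\<^sup>2 * (\<bar>A\<bar> / (A\<^sup>2 + 4 * P\<^sup>2 * y\<^sup>2)) \<le> 2 * t\<^sup>2 * (1 / (P\<^sup>2 - t\<^sup>2))"
    by (rule mult_left_mono) simp
  then show ?thesis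
    unfolding D A_def [symmetric] by (simp add: abs_mult)
qed

lemma abs_stirling_step_le:
  assumes "P > 1/2"
  shows "\<bar>stirling_step P y (1/2)\<bar> \<le> 1 / (12 * (P\<^sup>2 - 1/4))"
proof -
  define K where "K = P\<^sup>2 - 1/4"
  have "(1/2)\<^sup>2 < P\<^sup>2"
    using assms by (intro power_strict_mono) auto
  then have "K > 0" unfolding K_def by (simp add: power2_eq_square)
  have "\<bar>stirling_step P y (1/2) - stirling_step P y 0\<bar>
      \<le> 2 * (1/2) ^ 3 / (3 * K) - 2 * 0 ^ 3 / (3 * K)"
  proof (rule abs_diff_le_of_deriv_dominated)
    fix t :: real assume t: "0 \<le> t" "t \<le> 1/2"
    then show "(stirling_step P y has_real_derivative
        2 * t\<^sup>2 * (P\<^sup>2 - t\<^sup>2 - y\<^sup>2) / (((P + t)\<^sup>2 + y\<^sup>2) * ((P - t)\<^sup>2 + y\<^sup>2))) (at t)"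
      using assms by (intro stirling_step_has_derivative) auto
    show "((\<lambda>t. 2 * t ^ 3 / (3 * K)) has_real_derivative 2 * t\<^sup>2 / K) (at t)"
      using \<open>K > 0\<close> by (auto intro!: derivative_eq_intros simp: field_simps power2_eq_square)
    have "t\<^sup>2 \<le> (1/2)\<^sup>2" using t by (intro power_mono) auto
    then have "2 * t\<^sup>2 / (P\<^sup>2 - t\<^sup>2) \<le> 2 * t\<^sup>2 / K"
      using \<open>K > 0\<close> unfolding K_def by (intro divide_left_mono mult_pos_pos) (auto simp: power2_eq_square)
    with abs_stirling_step_deriv_le [of t P y] t assms
    show "\<bar>2 * t\<^sup>2 * (P\<^sup>2 - t\<^sup>2 - y\<^sup>2) / (((P + t)\<^sup>2 + y\<^sup>2) * ((P - t)\<^sup>2 + y\<^sup>2))\<bar>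
        \<le> 2 * t\<^sup>2 / K" by simp
  qed simp
  then show ?thesis
    by (simp add: stirling_step_def K_def power3_eq_cube)
qed

lemma norm_Gamma_Complex_pos: "x > 0 \<Longrightarrow> cmod (Gamma (Complex x y)) > 0"
  using Gamma_nonzero [of "Complex x y"] Re_pos_not_nonpos_Ints [of "Complex x y"] by auto

lemma stirling_remainder_diff:
  assumes "x > 0"
  shows "stirling_remainder x y - stirling_remainder (x + 1) y = stirling_step (x + 1/2) y (1/2)"
proof -
  have "Gamma (Complex x y + 1) = Complex x y * Gamma (Complex x y)"
    using assms by (intro Gamma_plus1 Re_pos_not_nonpos_Ints) simp
  then have "cmod (Gamma (Complex (x + 1) y)) = sqrt (x\<^sup>2 + y\<^sup>2) * cmod (Gamma (Complex x y))"
    by (simp add: norm_mult complex_norm plus_complex.code one_complex.code)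
  then have "ln (cmod (Gamma (Complex (x + 1) y))) = ln (x\<^sup>2 + y\<^sup>2) / 2 + ln (cmod (Gamma (Complex x y)))"
    using assms norm_Gamma_Complex_pos [OF assms, of y]
    by (simp add: ln_mult ln_sqrt add_pos_nonneg)
  moreover have "x + 1/2 + 1/2 = x + 1" "x + 1/2 - 1/2 = x" by simp_all
  ultimately show ?thesis
    unfolding stirling_remainder_def stirling_main_term_def stirling_step_def
    by (simp add: algebra_simps add_divide_distrib diff_divide_distrib)
qed

lemma abs_stirling_remainder_diff_le:
  assumes "x > 0"
  shows "\<bar>stirling_remainder x y - stirling_remainder (x + 1) y\<bar> \<le> 1 / (12 * x) - 1 / (12 * (x + 1))"
proof -
  have "(x + 1/2)\<^sup>2 - 1/4 = x * (x + 1)" by (simp add: power2_eq_square algebra_simps)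
  moreover have "1 / (12 * (x * (x + 1))) = 1 / (12 * x) - 1 / (12 * (x + 1))"
    using assms by (simp add: field_simps)
  ultimately show ?thesis
    using abs_stirling_step_le [of "x + 1/2" y] assms by (simp add: stirling_remainder_diff)
qed

lemma abs_stirling_remainder_diff_nat_le:
  assumes "x > 0"
  shows "\<bar>stirling_remainder x y - stirling_remainder (x + real n) y\<bar>
           \<le> 1 / (12 * x) - 1 / (12 * (x + real n))"
proof (induction n)
  case (Suc n)
  have "\<bar>stirling_remainder (x + real n) y - stirling_remainder (x + real n + 1) y\<bar>
      \<le> 1 / (12 * (x + real n)) - 1 / (12 * (x + real n + 1))"
    using assms by (intro abs_stirling_remainder_diff_le) simp
  moreover have "x + real (Suc n) = x + real n + 1" by simp
  ultimately show ?case
    using Suc.IH abs_triangle_ineq [of "stirling_remainder x y - stirling_remainder (x + real n) y"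
        "stirling_remainder (x + real n) y - stirling_remainder (x + real n + 1) y"]
    by (simp only:)
qed simp

lemma ln_norm_Gamma_plus_nat_asymp:
  fixes z :: complex
  assumes "Re z > 0"
  shows "(\<lambda>n. ln (cmod (Gamma (z + of_nat n + 1))) - ln (fact n) - Re z * ln (real n)) \<longlonglongrightarrow> 0"
proof -
  have "Gamma z \<noteq> 0" using assms by (intro Gamma_nonzero Re_pos_not_nonpos_Ints)
  have "Gamma_series z n / Gamma z = fact n * exp (z * of_real (ln (real n))) / Gamma (z + of_nat n + 1)" for n
    using pochhammer_Gamma [OF Re_pos_not_nonpos_Ints [OF assms], of "n + 1"] \<open>Gamma z \<noteq> 0\<close>
    by (simp add: Gamma_series_def field_simps add_ac)
  moreover have "(\<lambda>n. Gamma_series z n / Gamma z) \<longlonglongrightarrow> 1"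
    using tendsto_divide [OF Gamma_series_LIMSEQ [of z] tendsto_const \<open>Gamma z \<noteq> 0\<close>] \<open>Gamma z \<noteq> 0\<close>
    by simp
  ultimately have "(\<lambda>n. ln (cmod (fact n * exp (z * of_real (ln (real n))) / Gamma (z + of_nat n + 1))))
      \<longlonglongrightarrow> ln (cmod 1)"
    by (intro tendsto_ln tendsto_norm) simp_all
  moreover have "ln (cmod (fact n * exp (z * of_real (ln (real n))) / Gamma (z + of_nat n + 1)))
      = - (ln (cmod (Gamma (z + of_nat n + 1))) - ln (fact n) - Re z * ln (real n))" for n
  proof -
    have "cmod (Gamma (z + of_nat n + 1)) > 0"
      using assms by (simp add: Gamma_nonzero Re_pos_not_nonpos_Ints add_pos_nonneg)
    then show ?thesis by (simp add: norm_divide norm_mult ln_div ln_mult)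
  qed
  ultimately have "(\<lambda>n. - (ln (cmod (Gamma (z + of_nat n + 1))) - ln (fact n) - Re z * ln (real n)))
      \<longlonglongrightarrow> - 0"
    by simp
  then show ?thesis
    by (rule tendsto_minus_cancel)
qed

lemma stirling_main_term_zero: "x > 0 \<Longrightarrow> stirling_main_term x 0 = (x - 1/2) * ln x - x"
  by (simp add: stirling_main_term_def ln_realpow)

lemma stirling_main_term_abs: "stirling_main_term x \<bar>y\<bar> = stirling_main_term x y"
  by (cases "y \<ge> 0") (simp_all add: stirling_main_term_def arctan_minus)

lemma stirling_main_term_imag_tendsto:
  assumes "x > 0"
  shows "(\<lambda>n. stirling_main_term (x + real n) y - stirling_main_term (x + real n) 0) \<longlonglongrightarrow> 0"
proof (cases "y = 0")
  case False
  then have "\<bar>y\<bar> > 0" by simp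
  then have "(\<lambda>n. stirling_main_term (x + real n) \<bar>y\<bar> - stirling_main_term (x + real n) 0) \<longlonglongrightarrow> 0"
    using assms unfolding stirling_main_term_def by real_asymp
  then show ?thesis by (simp only: stirling_main_term_abs)
qed simp

lemma norm_Gamma_Complex_nat: "cmod (Gamma (Complex (real n + 1) 0)) = fact n"
proof -
  have "Complex (real n + 1) 0 = 1 + of_nat n" by (simp add: complex_eq_iff)
  then show ?thesis by (simp add: Gamma_fact)
qed

lemma stirling_remainder_shift_tendsto:
  assumes "x > 0"
  shows "(\<lambda>n. stirling_remainder (x + real n + 1) y - stirling_remainder (real n + 1) 0) \<longlonglongrightarrow> 0"
proof -
  define z where "z = Complex x y"
  have Gamma: "(\<lambda>n. ln (cmod (Gamma (z + of_nat n + 1))) - ln (fact n) - Re z * ln (real n)) \<longlonglongrightarrow> 0"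
    using assms unfolding z_def by (intro ln_norm_Gamma_plus_nat_asymp) simp
  have imag: "(\<lambda>n. stirling_main_term (x + 1 + real n) y - stirling_main_term (x + 1 + real n) 0)
      \<longlonglongrightarrow> 0"
    using assms by (intro stirling_main_term_imag_tendsto) simp
  have real: "(\<lambda>n. ((x + 1 + real n) - 1/2) * ln (x + 1 + real n) - (x + 1 + real n)
      - ((real n + 1 - 1/2) * ln (real n + 1) - (real n + 1)) - x * ln (real n)) \<longlonglongrightarrow> 0"
    using assms by real_asymp
  have "stirling_remainder (x + real n + 1) y - stirling_remainder (real n + 1) 0
      = (ln (cmod (Gamma (z + of_nat n + 1))) - ln (fact n) - Re z * ln (real n))
      - (stirling_main_term (x + 1 + real n) y - stirling_main_term (x + 1 + real n) 0)
      - (((x + 1 + real n) - 1/2) * ln (x + 1 + real n) - (x + 1 + real n)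
         - ((real n + 1 - 1/2) * ln (real n + 1) - (real n + 1)) - x * ln (real n))" for n
  proof -
    have "z + of_nat n + 1 = Complex (x + real n + 1) y"
      unfolding z_def by (simp add: complex_eq_iff)
    then show ?thesis
      using assms norm_Gamma_Complex_nat [of n]
      by (simp add: stirling_remainder_def stirling_main_term_zero z_def add_ac)
  qed
  then show ?thesis
    using tendsto_diff [OF tendsto_diff [OF Gamma imag] real] by simp
qed

lemma stirling_remainder_zero:
  assumes "x > 0"
  shows "stirling_remainder x 0 = ln (cmod (Gamma (complex_of_real x))) - (x - 1/2) * ln x + x - ln (2 * pi) / 2"
proof -
  have "Complex x 0 = complex_of_real x" by (simp add: complex_eq_iff)
  then show ?thesis
    using assms by (simp add: stirling_remainder_def stirling_main_term_zero)
qed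

lemma stirling_remainder_duplication:
  assumes "N > 0"
  shows "stirling_remainder N 0 + stirling_remainder (N + 1/2) 0 - stirling_remainder (2 * N) 0
           = 1/2 - N * ln (1 + 1 / (2 * N))"
proof -
  define w where "w = complex_of_real N"
  have "Gamma w * Gamma (w + 1/2) = exp ((1 - 2 * w) * of_real (ln 2)) * of_real (sqrt pi) * Gamma (2 * w)"
    using assms unfolding w_def by (intro Gamma_legendre_duplication Re_pos_not_nonpos_Ints) simp_all
  then have "cmod (Gamma w * Gamma (w + 1/2))
      = cmod (exp ((1 - 2 * w) * of_real (ln 2)) * of_real (sqrt pi) * Gamma (2 * w))"
    by (rule arg_cong)
  then have "cmod (Gamma w) * cmod (Gamma (w + 1/2)) = exp ((1 - 2 * N) * ln 2) * sqrt pi * cmod (Gamma (2 * w))"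
    by (simp add: norm_mult w_def)
  then have "ln (cmod (Gamma w) * cmod (Gamma (w + 1/2)))
      = ln (exp ((1 - 2 * N) * ln 2) * sqrt pi * cmod (Gamma (2 * w)))"
    by simp
  moreover have "cmod (Gamma w) > 0" "cmod (Gamma (w + 1/2)) > 0" "cmod (Gamma (2 * w)) > 0"
    using assms unfolding w_def by (auto intro!: Gamma_nonzero Re_pos_not_nonpos_Ints)
  ultimately have dup: "ln (cmod (Gamma w)) + ln (cmod (Gamma (w + 1/2))) - ln (cmod (Gamma (2 * w)))
      = (1 - 2 * N) * ln 2 + ln pi / 2"
    by (simp add: ln_mult ln_sqrt)
  have "w + 1/2 = complex_of_real (N + 1/2)" "2 * w = complex_of_real (2 * N)"
    unfolding w_def by simp_all
  then have "stirling_remainder N 0 + stirling_remainder (N + 1/2) 0 - stirling_remainder (2 * N) 0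
      = (ln (cmod (Gamma w)) + ln (cmod (Gamma (w + 1/2))) - ln (cmod (Gamma (2 * w))))
        - (N - 1/2) * ln N - N * ln (N + 1/2) + (2 * N - 1/2) * ln (2 * N) + 1/2 - ln (2 * pi) / 2"
    using assms by (simp add: stirling_remainder_zero w_def)
  also have "\<dots> = 1/2 - N * (ln (N + 1/2) - ln N)"
    unfolding dup using assms by (simp add: ln_mult algebra_simps)
  also have "ln (N + 1/2) - ln N = ln (1 + 1 / (2 * N))"
  proof -
    have "1 + 1 / (2 * N) = (N + 1/2) / N" using assms by (simp add: field_simps)
    then show ?thesis using assms by (simp add: ln_div)
  qed
  finally show ?thesis .
qed

lemma stirling_remainder_nat_tendsto: "(\<lambda>n. stirling_remainder (real n + 1) 0) \<longlonglongrightarrow> 0"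
proof -
  have dup: "(\<lambda>n. stirling_remainder (real n + 1) 0 + stirling_remainder (real n + 1 + 1/2) 0
      - stirling_remainder (2 * (real n + 1)) 0) \<longlonglongrightarrow> 0"
  proof -
    have "stirling_remainder (real n + 1) 0 + stirling_remainder (real n + 1 + 1/2) 0
        - stirling_remainder (2 * (real n + 1)) 0 = 1/2 - (real n + 1) * ln (1 + 1 / (2 * (real n + 1)))" for n
      by (rule stirling_remainder_duplication) simp
    then show ?thesis
      by (simp only:) real_asymp
  qed
  have shift: "(\<lambda>n. stirling_remainder (1/2 + real n + 1) 0 - stirling_remainder (real n + 1) 0) \<longlonglongrightarrow> 0"
    by (rule stirling_remainder_shift_tendsto) simp
  have double: "(\<lambda>n. stirling_remainder (2 * (real n + 1)) 0 - stirling_remainder (real n + 1) 0) \<longlonglongrightarrow> 0"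
  proof (rule Lim_null_comparison)
    show "\<forall>\<^sub>F n in sequentially. norm (stirling_remainder (2 * (real n + 1)) 0 - stirling_remainder (real n + 1) 0)
        \<le> 1 / (12 * (real n + 1))"
    proof (intro always_eventually allI)
      fix n :: nat
      have "real n + 1 + real (n + 1) = 2 * (real n + 1)" by simp
      with abs_stirling_remainder_diff_nat_le [of "real n + 1" 0 "n + 1"]
      have "\<bar>stirling_remainder (real n + 1) 0 - stirling_remainder (2 * (real n + 1)) 0\<bar>
          \<le> 1 / (12 * (real n + 1)) - 1 / (12 * (2 * (real n + 1)))"
        by (simp only:)
      also have "\<dots> \<le> 1 / (12 * (real n + 1))" by simp
      finally show "norm (stirling_remainder (2 * (real n + 1)) 0 - stirling_remainder (real n + 1) 0)
          \<le> 1 / (12 * (real n + 1))"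
        by (simp add: abs_minus_commute)
    qed
    show "(\<lambda>n. 1 / (12 * (real n + 1))) \<longlonglongrightarrow> 0" by real_asymp
  qed
  have "stirling_remainder (real n + 1) 0
      = (stirling_remainder (real n + 1) 0 + stirling_remainder (real n + 1 + 1/2) 0
         - stirling_remainder (2 * (real n + 1)) 0)
      - (stirling_remainder (1/2 + real n + 1) 0 - stirling_remainder (real n + 1) 0)
      + (stirling_remainder (2 * (real n + 1)) 0 - stirling_remainder (real n + 1) 0)" for n
    by (simp add: add_ac)
  then show ?thesis
    using tendsto_add [OF tendsto_diff [OF dup shift] double] by simp
qed

lemma stirling_remainder_tendsto:
  assumes "x > 0"
  shows "(\<lambda>n. stirling_remainder (x + real n) y) \<longlonglongrightarrow> 0"
proof -
  have "(\<lambda>n. (stirling_remainder (x + real n + 1) y - stirling_remainder (real n + 1) 0)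
      + stirling_remainder (real n + 1) 0) \<longlonglongrightarrow> 0 + 0"
    using assms by (intro tendsto_add stirling_remainder_shift_tendsto stirling_remainder_nat_tendsto)
  then have "(\<lambda>n. stirling_remainder (x + real (Suc n)) y) \<longlonglongrightarrow> 0"
    by (simp add: ac_simps)
  then show ?thesis
    by (rule LIMSEQ_imp_Suc)
qed

theorem abs_stirling_remainder_le:
  assumes "x > 0"
  shows "\<bar>stirling_remainder x y\<bar> \<le> 1 / (12 * x)"
proof -
  have "(\<lambda>n. 1 / (12 * x) + \<bar>stirling_remainder (x + real n) y\<bar>) \<longlonglongrightarrow> 1 / (12 * x) + \<bar>0\<bar>"
    using assms by (intro tendsto_add tendsto_const tendsto_rabs stirling_remainder_tendsto)
  moreover have "\<bar>stirling_remainder x y\<bar> \<le> 1 / (12 * x) + \<bar>stirling_remainder (x + real n) y\<bar>" for n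
  proof -
    have "1 / (12 * (x + real n)) \<ge> 0" using assms by simp
    then show ?thesis
      using abs_stirling_remainder_diff_nat_le [OF assms, of y n] by linarith
  qed
  ultimately show ?thesis
    using LIMSEQ_le_const by fastforce
qed

lemma norm_Gamma_Complex_sq:
  assumes "x > 0"
  shows "(cmod (Gamma (Complex x y)))\<^sup>2 = 2 * pi * (x\<^sup>2 + y\<^sup>2) powr (x - 1/2)
           * exp (- 2 * y * arctan (y / x) - 2 * x) * exp (2 * stirling_remainder x y)"
proof -
  define G where "G = cmod (Gamma (Complex x y))"
  have "G > 0" unfolding G_def using assms by (rule norm_Gamma_Complex_pos)
  have "G\<^sup>2 = exp (2 * ln G)"
    using \<open>G > 0\<close> by (simp add: exp_double)
  also have "2 * ln G = ln (2 * pi) + (x - 1/2) * ln (x\<^sup>2 + y\<^sup>2) + (- 2 * y * arctan (y / x) - 2 * x)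
      + 2 * stirling_remainder x y"
    unfolding G_def stirling_remainder_def stirling_main_term_def by (simp add: field_simps)
  finally show ?thesis
    unfolding G_def using assms by (simp add: exp_add powr_def)
qed

lemma MM_density_eq:
  assumes "\<rho> > 0"
  shows "MM_density \<rho> x = 2 powr (\<rho> - 1) / Gamma \<rho> * ((\<rho> / 2)\<^sup>2 + (x / 2)\<^sup>2) powr ((\<rho> - 1) / 2)
           * exp (- x * arctan (x / \<rho>) - \<rho>) * exp (2 * stirling_remainder (\<rho> / 2) (x / 2))"
proof -
  have "\<rho> / 2 - 1/2 = (\<rho> - 1) / 2" "- 2 * (x / 2) * arctan (x / 2 / (\<rho> / 2)) - 2 * (\<rho> / 2) = - x * arctan (x / \<rho>) - \<rho>"
    using assms by simp_all
  moreover have "2 powr (\<rho> - 2) * 2 = 2 powr (\<rho> - 1)"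
    using powr_add [of 2 "\<rho> - 2" 1] by simp
  ultimately show ?thesis
    using norm_Gamma_Complex_sq [of "\<rho> / 2" "x / 2"] assms
    by (simp add: MM_density_def field_simps)
qed

lemma betaized_MM_eq:
  assumes "a > 0" "b > 0"
  shows "betaized_MM a b s x = g_approx a b s x
           * exp (2 * stirling_remainder (a / 2) (x / 2)) * exp (2 * stirling_remainder (b / 2) ((s - x) / 2))"
proof -
  define Pa where "Pa = ((a / 2)\<^sup>2 + (x / 2)\<^sup>2) powr ((a - 1) / 2)"
  define Pb where "Pb = ((b / 2)\<^sup>2 + ((s - x) / 2)\<^sup>2) powr ((b - 1) / 2)"
  define Xa where "Xa = exp (- x * arctan (x / a))"
  define Xb where "Xb = exp (- (s - x) * arctan ((s - x) / b))"
  define Ea where "Ea = exp (2 * stirling_remainder (a / 2) (x / 2))"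
  define Eb where "Eb = exp (2 * stirling_remainder (b / 2) ((s - x) / 2))"
  define N where "N = (cmod (Gamma (Complex ((a + b) / 2) (s / 2))))\<^sup>2"
  have "N > 0"
    unfolding N_def using assms norm_Gamma_Complex_pos [of "(a + b) / 2" "s / 2"] by simp
  have "MM_density a x = 2 powr (a - 1) / Gamma a * Pa * (Xa / exp a) * Ea"
    and "MM_density b (s - x) = 2 powr (b - 1) / Gamma b * Pb * (Xb / exp b) * Eb"
    using assms by (simp_all add: MM_density_eq Pa_def Pb_def Xa_def Xb_def Ea_def Eb_def exp_diff)
  moreover have "MM_density (a + b) s = 2 powr (a - 1) * 2 powr (b - 1) / (pi * Gamma (a + b)) * N"
    by (simp add: MM_density_def N_def flip: powr_add)
  moreover have "g_approx a b s x = pi * Gamma (a + b) / (exp a * exp b * Gamma a * Gamma b * N) * Pa * Pb * (Xa * Xb)"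
  proof -
    have "exp (- x * arctan (x / a) - (s - x) * arctan ((s - x) / b)) = Xa * Xb"
      unfolding Xa_def Xb_def by (simp add: exp_add [symmetric] algebra_simps)
    then show ?thesis
      unfolding g_approx_def gamma_const_def Pa_def [symmetric] Pb_def [symmetric] N_def [symmetric] exp_add
      by simp
  qed
  ultimately show ?thesis
    unfolding betaized_MM_def Ea_def [symmetric] Eb_def [symmetric]
    using assms \<open>N > 0\<close> by (simp add: field_simps)
qed

lemma g_approx_nonneg:
  assumes "a > 0" "b > 0"
  shows "g_approx a b s x \<ge> 0"
  using assms norm_Gamma_Complex_pos [of "(a + b) / 2" "s / 2"]
  by (simp add: g_approx_def gamma_const_def)

lemma pi_le_16_5: "pi \<le> 16 / 5"
proof -
  have "arctan (1 / 5) \<le> (1 / 5 :: real)" by (rule arctan_le_self) simp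
  moreover have "arctan (1 / 239) \<ge> (0 :: real)" by simp
  ultimately show ?thesis using pi_machin by linarith
qed

lemma exp_two_mult_bounds:
  fixes m y k :: real
  assumes "\<bar>m\<bar> \<le> y" "y \<le> 1/6" "7/6 \<le> k" "k * y \<le> 1"
  shows "(1 - k * y)\<^sup>2 \<le> exp (2 * m) \<and> exp (2 * m) \<le> (1 + k * y)\<^sup>2"
proof -
  have "y \<ge> 0" using assms(1) by linarith
  have "1 - k * y \<le> 1 - y"
    using \<open>y \<ge> 0\<close> assms(3) mult_right_mono [of 1 k y] by simp
  also have "1 - y \<le> exp (- y)" using exp_ge_add_one_self [of "- y"] by simp
  also have "exp (- y) \<le> exp m" using assms(1) by simp
  finally have lower: "1 - k * y \<le> exp m" .
  have "exp m \<le> exp y" using assms(1) by simp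
  also have "exp y \<le> 1 + y + y\<^sup>2"
    using \<open>y \<ge> 0\<close> assms(2) by (intro exp_bound) auto
  also have "y\<^sup>2 \<le> y / 6"
    using \<open>y \<ge> 0\<close> assms(2) mult_left_mono [of y "1/6" y] by (simp add: power2_eq_square)
  then have "1 + y + y\<^sup>2 \<le> 1 + k * y"
    using \<open>y \<ge> 0\<close> assms(3) mult_right_mono [of "7/6" k y] by simp
  finally have upper: "exp m \<le> 1 + k * y" .
  show ?thesis
    using lower upper assms(4) by (auto simp: exp_double intro: power_mono)
qed

lemma exp_stirling_remainder_bounds:
  assumes "a \<ge> 1"
  shows "(1 - 3 / (a * pi\<^sup>2))\<^sup>2 \<le> exp (2 * stirling_remainder (a / 2) y)
         \<and> exp (2 * stirling_remainder (a / 2) y) \<le> (1 + 3 / (a * pi\<^sup>2))\<^sup>2"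
proof -
  have "\<bar>stirling_remainder (a / 2) y\<bar> \<le> 1 / (6 * a)"
    using abs_stirling_remainder_le [of "a / 2" y] assms by simp
  moreover have "1 / (6 * a) \<le> 1 / 6" using assms by (simp add: field_simps)
  moreover have "pi\<^sup>2 \<le> (16 / 5)\<^sup>2" using pi_le_16_5 by (intro power_mono) auto
  then have "7 / 6 \<le> 18 / pi\<^sup>2" by (simp add: field_simps)
  moreover have "2\<^sup>2 \<le> pi\<^sup>2" using pi_ge_two by (intro power_mono) auto
  then have "3 \<le> a * pi\<^sup>2" using assms mult_mono [of 1 a 4 "pi\<^sup>2"] by simp
  then have "18 / pi\<^sup>2 * (1 / (6 * a)) \<le> 1"
    using assms by (simp add: field_simps)
  ultimately have "(1 - 18 / pi\<^sup>2 * (1 / (6 * a)))\<^sup>2 \<le> exp (2 * stirling_remainder (a / 2) y)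
      \<and> exp (2 * stirling_remainder (a / 2) y) \<le> (1 + 18 / pi\<^sup>2 * (1 / (6 * a)))\<^sup>2"
    by (rule exp_two_mult_bounds)
  moreover have "18 / pi\<^sup>2 * (1 / (6 * a)) = 3 / (a * pi\<^sup>2)" by (simp add: field_simps)
  ultimately show ?thesis by (simp only:)
qed

theorem mainTheorem2:
  fixes a b s :: real
  assumes "a \<ge> 1" and "b \<ge> 1"
  shows "\<forall>x::real.
    (1 - 3 / (a * pi\<^sup>2))\<^sup>2 * (1 - 3 / (b * pi\<^sup>2))\<^sup>2 * g_approx a b s x \<le> betaized_MM a b s x \<and>
    betaized_MM a b s x \<le> (1 + 3 / (a * pi\<^sup>2))\<^sup>2 * (1 + 3 / (b * pi\<^sup>2))\<^sup>2 * g_approx a b s x"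
proof
  fix x :: real
  define Ea where "Ea = exp (2 * stirling_remainder (a / 2) (x / 2))"
  define Eb where "Eb = exp (2 * stirling_remainder (b / 2) ((s - x) / 2))"
  have f: "betaized_MM a b s x = Ea * Eb * g_approx a b s x"
    using assms by (simp add: betaized_MM_eq Ea_def Eb_def)
  have g: "g_approx a b s x \<ge> 0"
    using assms by (intro g_approx_nonneg) auto
  have "(1 - 3 / (a * pi\<^sup>2))\<^sup>2 \<le> Ea" "Ea \<le> (1 + 3 / (a * pi\<^sup>2))\<^sup>2"
    and "(1 - 3 / (b * pi\<^sup>2))\<^sup>2 \<le> Eb" "Eb \<le> (1 + 3 / (b * pi\<^sup>2))\<^sup>2"
    unfolding Ea_def Eb_def using exp_stirling_remainder_bounds assms by blast+
  then have "(1 - 3 / (a * pi\<^sup>2))\<^sup>2 * (1 - 3 / (b * pi\<^sup>2))\<^sup>2 \<le> Ea * Eb"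
    and "Ea * Eb \<le> (1 + 3 / (a * pi\<^sup>2))\<^sup>2 * (1 + 3 / (b * pi\<^sup>2))\<^sup>2"
    using exp_ge_zero unfolding Ea_def Eb_def by (auto intro!: mult_mono)
  then show "(1 - 3 / (a * pi\<^sup>2))\<^sup>2 * (1 - 3 / (b * pi\<^sup>2))\<^sup>2 * g_approx a b s x \<le> betaized_MM a b s x \<and>
    betaized_MM a b s x \<le> (1 + 3 / (a * pi\<^sup>2))\<^sup>2 * (1 + 3 / (b * pi\<^sup>2))\<^sup>2 * g_approx a b s x"
    unfolding f using g by (auto intro: mult_right_mono)
qed

end
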